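(* Let $g(x)=\alpha x^{q^k}+\beta x$ with $\alpha\in\mathbb{F}_{q^n}^*$, $\beta\in\mathbb{F}_{q^n}$, $1\le k<n$, let $f(y)=a_dy^{q^d}$ with $a_d\in\mathbb{F}_{q^n}^*$, $0\le d<n$, and let $0\le h<n$ with $h\ne d$. (1) If $\beta=0$, then $L_g\cap L_f\ne\emptyset$ if and only if $\mathrm{N}_{q^n/q^e}(a_d/\alpha)=1$, where $e=\gcd(n,k,d-h)$. (2) If $\beta\neq0$ and $k+|d-h|\le n/2$, then $L_g\cap L_f\neq\emptyset$.
   Context: Let $q$ be a prime power, $n\ge2$. For $e\mid n$, $\mathrm{N}_{q^n/q^e}(x)=x^{(q^n-1)/(q^e-1)}$; $\gcd$ is taken positive. For $q$-polynomials $g,f$ over $\mathbb{F}_{q^n}$ and an integer $0\le h<n$: $L_g=\{\langle(x,g(x))\rangle_{\mathbb{F}_{q^n}}:x\in\mathbb{F}_{q^n}^*\}$ and $L_f=\{\langle(y^{q^h},f(y))\rangle_{\mathbb{F}_{q^n}}:y\in\mathbb{F}_{q^n}^*\}$, points of $\mathrm{PG}(1,q^n)$. *)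

theory Defs
  imports "HOL-Computational_Algebra.Primes"
begin

text \<open>The point of PG(1,F) spanned by the nonzero vector (a,b): the 1-dimensional
  F-subspace {(c*a, c*b) | c}.\<close>
definition proj_pt :: "'a::field \<Rightarrow> 'a \<Rightarrow> ('a \<times> 'a) set" where
  "proj_pt a b = {(c * a, c * b) | c. True}"

definition L_graph :: "('a::field \<Rightarrow> 'a) \<Rightarrow> ('a \<times> 'a) set set" where
  "L_graph g = {proj_pt x (g x) | x. x \<noteq> 0}"

definition L_twisted :: "nat \<Rightarrow> nat \<Rightarrow> ('a::field \<Rightarrow> 'a) \<Rightarrow> ('a \<times> 'a) set set" where
  "L_twisted q h f = {proj_pt (y ^ (q ^ h)) (f y) | y. y \<noteq> 0}"

definition rel_norm :: "nat \<Rightarrow> nat \<Rightarrow> nat \<Rightarrow> 'a::field \<Rightarrow> 'a" where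
  "rel_norm q n e x = x ^ ((q ^ n - 1) div (q ^ e - 1))"

end

theory Submission
  imports Defs "HOL-Algebra.Algebraic_Closure_Type" "HOL-Analysis.Complex_Transcendental"
begin

(* A point common to L_g and L_f is a pair x, y <> 0 with x f(y) = y^(q^h) g(x).  Cancelling x
   and absorbing the Frobenius twist (y |-> y^(q^j) permutes the nonzero elements) turns this into:
   some u = x^(q^k - 1) makes (alpha u + beta)/a_d a (q^t - 1)-th power, where t = |d - h|.  In the
   cyclic group F^* the nonzero r-th powers are the kernel of w |-> w^((q^n - 1)/gcd(r, q^n - 1)).

   For beta = 0 the condition says that a_d/alpha is a product of a (q^k - 1)-th and a (q^t - 1)-th
   power, i.e. a (q^e - 1)-th power with e = gcd(n, k, t), i.e. an element of norm 1 over F_(q^e).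

   For beta <> 0 one needs s <> 0, 1 such that -beta s/alpha and beta (1 - s)/a_d lie in the
   subgroups of indices m1 <= q^k - 1 and m2 <= q^t - 1.  Expanding both indicator functions into
   multiplicative characters, m1 m2 times the number of such s is q^n - 2 plus m1 m2 - 1 Jacobi sums
   of absolute value at most q^(n/2); this is positive as soon as (m1 m2 - 1) q^(n/2) < q^n - 2,
   which k + t <= n/2 guarantees. *)

lemma two_le_card_field: "2 \<le> CARD('a::{finite,field})"
  using card_mono[of UNIV "{0::'a, 1}"] by simp

lemma power_card_minus_one_eq_1:
  fixes x :: "'a::{finite,field}"
  assumes "x \<noteq> 0"
  shows "x ^ (CARD('a) - 1) = 1"
proof -
  let ?P = "\<Prod>y\<in>UNIV - {0::'a}. y"
  have "(\<Prod>y\<in>UNIV - {0}. x * y) = ?P"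
    by (rule prod.reindex_bij_witness[of _ "\<lambda>y. y / x" "\<lambda>y. x * y"]) (use assms in auto)
  then have "x ^ (CARD('a) - 1) * ?P = 1 * ?P"
    by (simp add: prod.distrib card_Diff_singleton)
  moreover have "?P \<noteq> 0" by simp
  ultimately show ?thesis by (rule mult_right_cancel[THEN iffD1, rotated])
qed

lemma power_card_eq: "(x::'a::{finite,field}) ^ CARD('a) = x"
proof (cases "x = 0")
  case False
  have "CARD('a) = Suc (CARD('a) - 1)" using two_le_card_field[where 'a='a] by simp
  then have "x ^ CARD('a) = x * x ^ (CARD('a) - 1)" by (metis power_Suc)
  then show ?thesis using power_card_minus_one_eq_1[OF False] by simp
qed (use two_le_card_field[where 'a='a] in simp)

lemma base_pos_of_card_eq_power:
  assumes "CARD('a::{finite,field}) = q ^ n"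
  shows "q > 0"
  using assms two_le_card_field[where 'a='a] by (cases "q = 0") (auto simp: power_0_left split: if_splits)

lemma frobenius_power_inverse:
  fixes z :: "'a::{finite,field}"
  assumes "CARD('a) = q ^ n" and "j \<le> n"
  shows "(z ^ q ^ (n - j)) ^ q ^ j = z"
proof -
  have "q ^ (n - j) * q ^ j = CARD('a)" using assms by (simp flip: power_add)
  then show ?thesis by (simp add: power_card_eq flip: power_mult)
qed

lemma ex_nonzero_frobenius_iff:
  fixes P :: "'a::{finite,field} \<Rightarrow> bool"
  assumes "CARD('a) = q ^ n" and "j \<le> n"
  shows "(\<exists>y. y \<noteq> 0 \<and> P (y ^ q ^ j)) \<longleftrightarrow> (\<exists>z. z \<noteq> 0 \<and> P z)"
proof
  assume "\<exists>z. z \<noteq> 0 \<and> P z"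
  then obtain z where "z \<noteq> 0" "P z" by blast
  then show "\<exists>y. y \<noteq> 0 \<and> P (y ^ q ^ j)"
    using frobenius_power_inverse[OF assms, of z] by (intro exI[of _ "z ^ q ^ (n - j)"]) auto
next
  assume "\<exists>y. y \<noteq> 0 \<and> P (y ^ q ^ j)"
  then obtain y where "y \<noteq> 0" "P (y ^ q ^ j)" by blast
  then show "\<exists>z. z \<noteq> 0 \<and> P z" by (intro exI[of _ "y ^ q ^ j"]) simp
qed

definition mult_character :: "('a::field \<Rightarrow> complex) \<Rightarrow> bool" where
  "mult_character \<phi> \<longleftrightarrow>
     (\<forall>x y. x \<noteq> 0 \<longrightarrow> y \<noteq> 0 \<longrightarrow> \<phi> (x * y) = \<phi> x * \<phi> y) \<and> (\<forall>x. x \<noteq> 0 \<longrightarrow> norm (\<phi> x) = 1)"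

definition char_sum :: "('a::{finite,zero} \<Rightarrow> complex) \<Rightarrow> complex" where
  "char_sum \<phi> = (\<Sum>x\<in>UNIV - {0}. \<phi> x)"

definition jacobi_sum :: "('a::{finite,field} \<Rightarrow> complex) \<Rightarrow> ('a \<Rightarrow> complex) \<Rightarrow> complex" where
  "jacobi_sum \<phi> \<psi> = (\<Sum>s\<in>UNIV - {0, 1}. \<phi> s * \<psi> (1 - s))"

lemma mult_characterD:
  assumes "mult_character \<phi>"
  shows mult_character_mult: "x \<noteq> 0 \<Longrightarrow> y \<noteq> 0 \<Longrightarrow> \<phi> (x * y) = \<phi> x * \<phi> y"
    and mult_character_norm: "x \<noteq> 0 \<Longrightarrow> norm (\<phi> x) = 1"
  using assms unfolding mult_character_def by blast+

lemma mult_character_one: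
  assumes "mult_character \<phi>"
  shows "\<phi> 1 = 1"
proof -
  have "\<phi> 1 = \<phi> 1 * \<phi> 1" using mult_character_mult[OF assms, of 1 1] by simp
  moreover have "\<phi> 1 \<noteq> 0" using mult_character_norm[OF assms, of 1] by auto
  ultimately show ?thesis by simp
qed

lemma mult_character_cnj:
  assumes "mult_character \<phi>" and "x \<noteq> 0"
  shows "cnj (\<phi> x) = \<phi> (inverse x)"
proof -
  have "\<phi> x * \<phi> (inverse x) = \<phi> (x * inverse x)"
    using mult_character_mult[OF assms, of "inverse x"] assms(2) by simp
  then have inv: "\<phi> x * \<phi> (inverse x) = 1" using assms by (simp add: mult_character_one)
  have norm: "\<phi> x * cnj (\<phi> x) = 1"
    using complex_norm_square[of "\<phi> x"] mult_character_norm[OF assms] by simp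
  have "cnj (\<phi> x) = cnj (\<phi> x) * (\<phi> x * \<phi> (inverse x))" using inv by simp
  also have "\<dots> = (\<phi> x * cnj (\<phi> x)) * \<phi> (inverse x)" by (simp only: mult_ac)
  finally show ?thesis using norm by simp
qed

lemma mult_character_times:
  "mult_character \<phi> \<Longrightarrow> mult_character \<psi> \<Longrightarrow> mult_character (\<lambda>x. \<phi> x * \<psi> x)"
  unfolding mult_character_def by (simp add: norm_mult mult_ac)

lemma char_sum_eq:
  fixes \<phi> :: "'a::{finite,field} \<Rightarrow> complex"
  assumes "mult_character \<phi>"
  shows "char_sum \<phi> = (if \<forall>x. x \<noteq> 0 \<longrightarrow> \<phi> x = 1 then of_nat (CARD('a) - 1) else 0)"
proof (cases "\<forall>x. x \<noteq> 0 \<longrightarrow> \<phi> x = 1")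
  case True
  then show ?thesis by (simp add: char_sum_def card_Diff_singleton)
next
  case False
  then obtain w where w: "w \<noteq> 0" "\<phi> w \<noteq> 1" by blast
  have "char_sum \<phi> = (\<Sum>x\<in>UNIV - {0}. \<phi> (w * x))"
    unfolding char_sum_def
    by (rule sum.reindex_bij_witness[of _ "\<lambda>x. w * x" "\<lambda>x. x / w"]) (use w in auto)
  also have "\<dots> = \<phi> w * char_sum \<phi>"
    unfolding char_sum_def sum_distrib_left
    using w(1) by (intro sum.cong) (simp_all add: mult_character_mult[OF assms])
  finally have "(1 - \<phi> w) * char_sum \<phi> = 0" by (simp add: algebra_simps)
  then show ?thesis unfolding if_not_P[OF False] using w(2) by simp
qed

lemma sum_moebius_reindex:
  fixes t :: "'a::{finite,field}"
  assumes "t \<noteq> 0" "t \<noteq> 1"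
  shows "(\<Sum>y | y \<noteq> 0 \<and> y \<noteq> 1 \<and> t * y \<noteq> 1. f ((1 - t * y) / (1 - y))) = (\<Sum>z\<in>UNIV - {0, 1, t}. f z)"
proof (rule sum.reindex_bij_witness[of _ "\<lambda>z. (1 - z) / (t - z)" "\<lambda>y. (1 - t * y) / (1 - y)"])
  have t: "t - 1 \<noteq> 0" using assms by simp
  fix y :: 'a assume "y \<in> {y. y \<noteq> 0 \<and> y \<noteq> 1 \<and> t * y \<noteq> 1}"
  then have y: "y \<noteq> 0" "1 - y \<noteq> 0" "1 - t * y \<noteq> 0" by auto
  have "1 - (1 - t * y) / (1 - y) = y * (t - 1) / (1 - y)"
    and "t - (1 - t * y) / (1 - y) = (t - 1) / (1 - y)"
    using y by (simp_all add: field_simps)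
  then show "(1 - (1 - t * y) / (1 - y)) / (t - (1 - t * y) / (1 - y)) = y"
    using y t by simp
  show "(1 - t * y) / (1 - y) \<in> UNIV - {0, 1, t}"
    using assms y by (auto simp: field_simps)
next
  have t: "t - 1 \<noteq> 0" using assms by simp
  fix z :: 'a assume "z \<in> UNIV - {0, 1, t}"
  then have z: "z \<noteq> 0" "1 - z \<noteq> 0" "t - z \<noteq> 0" by auto
  have "1 - t * ((1 - z) / (t - z)) = z * (t - 1) / (t - z)"
    and "1 - (1 - z) / (t - z) = (t - 1) / (t - z)"
    using z by (simp_all add: field_simps)
  then show "(1 - t * ((1 - z) / (t - z))) / (1 - (1 - z) / (t - z)) = z"
    using z t by simp
  show "(1 - z) / (t - z) \<in> {y. y \<noteq> 0 \<and> y \<noteq> 1 \<and> t * y \<noteq> 1}"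
    using assms z by (auto simp: field_simps)
qed auto

text \<open>Substituting \<open>x = t y\<close> in the double sum defining \<open>J \<phi> \<psi> \<cdot> conj (J \<phi> \<psi>)\<close>.\<close>
lemma jacobi_sum_times_cnj_eq_double_sum:
  fixes \<phi> \<psi> :: "'a::{finite,field} \<Rightarrow> complex"
  assumes "mult_character \<phi>" "mult_character \<psi>"
  shows "jacobi_sum \<phi> \<psi> * cnj (jacobi_sum \<phi> \<psi>)
    = (\<Sum>t\<in>UNIV - {0}. \<phi> t * (\<Sum>y | y \<noteq> 0 \<and> y \<noteq> 1 \<and> t * y \<noteq> 1. \<psi> ((1 - t * y) / (1 - y))))"
proof -
  let ?S = "UNIV - {0, 1 :: 'a}"
  have summand: "\<phi> x * \<psi> (1 - x) * cnj (\<phi> y * \<psi> (1 - y)) = \<phi> (x / y) * \<psi> ((1 - x) / (1 - y))"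
    if "x \<in> ?S" "y \<in> ?S" for x y
  proof -
    have nz: "x \<noteq> 0" "y \<noteq> 0" "1 - x \<noteq> 0" "1 - y \<noteq> 0" using that by auto
    have "\<phi> (x / y) = \<phi> x * cnj (\<phi> y)" "\<psi> ((1 - x) / (1 - y)) = \<psi> (1 - x) * cnj (\<psi> (1 - y))"
      using nz by (simp_all add: divide_inverse mult_character_mult mult_character_cnj assms)
    then show ?thesis by (simp add: mult_ac)
  qed
  have inner: "(\<Sum>x\<in>?S. \<phi> (x / y) * \<psi> ((1 - x) / (1 - y)))
      = (\<Sum>t | t \<in> UNIV - {0} \<and> t * y \<noteq> 1. \<phi> t * \<psi> ((1 - t * y) / (1 - y)))"
    if "y \<in> ?S" for y
    by (rule sum.reindex_bij_witness[of _ "\<lambda>t. t * y" "\<lambda>x. x / y"]) (use that in auto)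
  have "jacobi_sum \<phi> \<psi> * cnj (jacobi_sum \<phi> \<psi>)
      = (\<Sum>y\<in>?S. \<Sum>x\<in>?S. \<phi> x * \<psi> (1 - x) * cnj (\<phi> y * \<psi> (1 - y)))"
    unfolding jacobi_sum_def cnj_sum sum_product by (rule sum.swap)
  also have "\<dots> = (\<Sum>y\<in>?S. \<Sum>x\<in>?S. \<phi> (x / y) * \<psi> ((1 - x) / (1 - y)))"
    by (intro sum.cong refl) (rule summand)
  also have "\<dots> = (\<Sum>y\<in>?S. \<Sum>t | t \<in> UNIV - {0} \<and> t * y \<noteq> 1. \<phi> t * \<psi> ((1 - t * y) / (1 - y)))"
    by (rule sum.cong[OF refl], rule inner)
  also have "\<dots> = (\<Sum>t\<in>UNIV - {0}. \<Sum>y | y \<in> ?S \<and> t * y \<noteq> 1. \<phi> t * \<psi> ((1 - t * y) / (1 - y)))"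
    by (rule sum.swap_restrict) auto
  finally show ?thesis by (simp add: sum_distrib_left)
qed

lemma jacobi_sum_times_cnj:
  fixes \<phi> \<psi> :: "'a::{finite,field} \<Rightarrow> complex"
  assumes "mult_character \<phi>" "mult_character \<psi>"
  shows "jacobi_sum \<phi> \<psi> * cnj (jacobi_sum \<phi> \<psi>)
    = of_nat CARD('a) - 1 + (char_sum \<psi> - 1) * (char_sum \<phi> - 1) - char_sum (\<lambda>x. \<phi> x * \<psi> x)"
proof -
  let ?S = "UNIV - {0, 1 :: 'a}"
  let ?inner = "\<lambda>t. \<Sum>y | y \<noteq> 0 \<and> y \<noteq> 1 \<and> t * y \<noteq> 1. \<psi> ((1 - t * y) / (1 - y))"
  have one: "\<phi> 1 = 1" "\<psi> 1 = 1" using assms by (simp_all add: mult_character_one)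
  have split: "UNIV - {0} = insert 1 ?S" by auto
  have "?inner 1 = (\<Sum>y\<in>?S. 1)"
    using one by (intro sum.cong) auto
  also have "\<dots> = of_nat (card ?S)" by simp
  also have "card ?S = CARD('a) - 2" by (simp add: card_Diff_subset)
  finally have inner1: "?inner 1 = of_nat CARD('a) - 2"
    using two_le_card_field[where 'a='a] by (simp add: of_nat_diff)
  have inner: "?inner t = char_sum \<psi> - 1 - \<psi> t" if "t \<in> ?S" for t
  proof -
    have "?inner t = (\<Sum>z\<in>(UNIV - {0}) - {1, t}. \<psi> z)"
      using sum_moebius_reindex[of t \<psi>] that by (simp add: Diff_insert2 [symmetric] insert_commute)
    also have "\<dots> = char_sum \<psi> - (\<psi> 1 + \<psi> t)"
      unfolding char_sum_def using that by (subst sum_diff) auto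
    finally show ?thesis using one by simp
  qed
  have sum_split: "char_sum \<rho> = \<rho> 1 + (\<Sum>t\<in>?S. \<rho> t)" for \<rho> :: "'a \<Rightarrow> complex"
    unfolding char_sum_def split by simp
  have "jacobi_sum \<phi> \<psi> * cnj (jacobi_sum \<phi> \<psi>) = ?inner 1 + (\<Sum>t\<in>?S. \<phi> t * ?inner t)"
    unfolding jacobi_sum_times_cnj_eq_double_sum[OF assms] split using one by simp
  also have "(\<Sum>t\<in>?S. \<phi> t * ?inner t) = (\<Sum>t\<in>?S. \<phi> t * (char_sum \<psi> - 1 - \<psi> t))"
    by (rule sum.cong[OF refl]) (simp add: inner)
  also have "(\<Sum>t\<in>?S. \<phi> t * (char_sum \<psi> - 1 - \<psi> t))
      = (char_sum \<psi> - 1) * (\<Sum>t\<in>?S. \<phi> t) - (\<Sum>t\<in>?S. \<phi> t * \<psi> t)"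
    by (simp add: sum_subtractf sum_distrib_left sum.distrib algebra_simps)
  finally show ?thesis
    using one unfolding inner1 sum_split[of \<phi>] sum_split[of "\<lambda>x. \<phi> x * \<psi> x"] by (simp add: algebra_simps)
qed

lemma norm_jacobi_sum_le:
  fixes \<phi> \<psi> :: "'a::{finite,field} \<Rightarrow> complex"
  assumes "mult_character \<phi>" "mult_character \<psi>" and "\<exists>x. x \<noteq> 0 \<and> (\<phi> x \<noteq> 1 \<or> \<psi> x \<noteq> 1)"
  shows "norm (jacobi_sum \<phi> \<psi>) \<le> sqrt CARD('a)"
proof -
  let ?J = "jacobi_sum \<phi> \<psi>"
  define trivial where "trivial \<rho> \<longleftrightarrow> (\<forall>x. x \<noteq> 0 \<longrightarrow> \<rho> x = 1)" for \<rho> :: "'a \<Rightarrow> complex"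
  have Q: "of_nat (CARD('a) - 1) = (of_nat CARD('a) - 1 :: complex)"
    using two_le_card_field[where 'a='a] by (simp add: of_nat_diff)
  note sums = char_sum_eq[OF assms(1)] char_sum_eq[OF assms(2)]
    char_sum_eq[OF mult_character_times[OF assms(1,2)]]
  have "\<not> (trivial \<phi> \<and> trivial \<psi>)"
    and "trivial \<phi> \<Longrightarrow> trivial (\<lambda>x. \<phi> x * \<psi> x) \<longleftrightarrow> trivial \<psi>"
    and "trivial \<psi> \<Longrightarrow> trivial (\<lambda>x. \<phi> x * \<psi> x) \<longleftrightarrow> trivial \<phi>"
    using assms(3) by (auto simp: trivial_def)
  then have "?J * cnj ?J = 1 \<or> ?J * cnj ?J = of_nat CARD('a)"
    unfolding jacobi_sum_times_cnj[OF assms(1,2)] sums trivial_def[symmetric]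
    by (cases "trivial \<phi>"; cases "trivial \<psi>"; cases "trivial (\<lambda>x. \<phi> x * \<psi> x)")
       (simp_all add: Q algebra_simps)
  then have "(norm ?J)\<^sup>2 = 1 \<or> (norm ?J)\<^sup>2 = CARD('a)"
    by (metis complex_norm_square of_real_1 of_real_eq_iff of_real_of_nat_eq)
  then have "(norm ?J)\<^sup>2 \<le> CARD('a)" using two_le_card_field[where 'a='a] by auto
  then show ?thesis by (rule real_le_rsqrt)
qed

lemma multiple_of_quotient_dvd_imp_eq_0:
  fixes N m i :: nat
  assumes "N > 0" "m dvd N" "i < m" "N dvd N div m * i"
  shows "i = 0"
proof (rule ccontr)
  assume "i \<noteq> 0"
  have N: "N div m * m = N" using assms(2) by simp
  then have "N div m > 0" using assms(1) by (cases "N div m") auto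
  then have "0 < N div m * i" "N div m * i < N div m * m" using assms(3) \<open>i \<noteq> 0\<close> by simp_all
  then show False using assms(4) N by (simp add: nat_dvd_not_less)
qed

lemma power_eq_power_iff_mod:
  fixes x :: "'b::field"
  assumes "N > 0" and order: "\<And>i. x ^ i = 1 \<longleftrightarrow> N dvd i"
  shows "x ^ i = x ^ j \<longleftrightarrow> i mod N = j mod N"
proof -
  have "x \<noteq> 0" using order[of N] assms(1) by (auto simp: power_0_left)
  have *: "x ^ i = x ^ j \<longleftrightarrow> i mod N = j mod N" if "i \<le> j" for i j
  proof -
    have "x ^ j = x ^ i * x ^ (j - i)" using that by (simp flip: power_add)
    then have "x ^ i = x ^ j \<longleftrightarrow> x ^ (j - i) = 1" using \<open>x \<noteq> 0\<close> by auto
    also have "\<dots> \<longleftrightarrow> j mod N = i mod N" by (simp add: order mod_eq_dvd_iff_nat[OF that])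
    finally show ?thesis by auto
  qed
  show ?thesis using *[of i j] *[of j i] by (cases "i \<le> j") auto
qed

lemma exp_root_of_unity_power_eq_1_iff:
  assumes "n \<ge> 1"
  shows "exp (2 * of_real pi * \<i> / of_nat n) ^ j = 1 \<longleftrightarrow> n dvd j"
proof -
  have "exp (2 * of_real pi * \<i> / of_nat n) ^ j = exp (2 * of_real pi * \<i> * of_nat j / of_nat n)"
    by (simp flip: exp_of_nat_mult add: field_simps)
  then show ?thesis using complex_root_unity_eq_1[OF assms] by simp
qed

definition primitive_element :: "'a::field \<Rightarrow> bool" where
  "primitive_element g \<longleftrightarrow> g \<noteq> 0 \<and> (\<forall>w. w \<noteq> 0 \<longrightarrow> (\<exists>i. g ^ i = w))"

lemma ex_primitive_element: "\<exists>g::'a::{finite,field}. primitive_element g"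
proof -
  let ?R = "ring_of_type_algebra :: 'a ring"
  interpret F: field ?R by (rule field_from_type_algebra)
  have units: "carrier (Multiplicative_Group.mult_of ?R) = UNIV - {0}"
    by (simp add: ring_of_type_algebra_def)
  have pow: "x [^]\<^bsub>?R\<^esub> i = x ^ i" for x :: 'a and i :: nat
    by (induction i) (simp_all add: ring_of_type_algebra_def)
  have "finite (carrier ?R)" by (simp add: ring_of_type_algebra_def)
  from F.finite_field_mult_group_has_gen[OF this] obtain g
    where g: "g \<in> carrier (Multiplicative_Group.mult_of ?R)"
      and gen: "carrier (Multiplicative_Group.mult_of ?R) = {g [^]\<^bsub>?R\<^esub> i | i::nat. i \<in> UNIV}"
    by (elim bexE)
  have "\<exists>i. g ^ i = w" if "w \<noteq> 0" for w
  proof -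
    have "w \<in> {g [^]\<^bsub>?R\<^esub> i | i::nat. i \<in> UNIV}" using that gen units by simp
    then show ?thesis by (auto simp only: pow)
  qed
  moreover have "g \<noteq> 0" using g by (simp add: ring_of_type_algebra_def)
  ultimately show ?thesis unfolding primitive_element_def by blast
qed

locale primitive_root =
  fixes g :: "'a::{finite,field}"
  assumes primitive: "primitive_element g"
begin

lemma nonzero: "g \<noteq> 0"
  using primitive by (simp add: primitive_element_def)

lemma power_eq_1_iff: "g ^ i = 1 \<longleftrightarrow> (CARD('a) - 1) dvd i"
proof -
  let ?N = "CARD('a) - 1"
  have N: "?N > 0" using two_le_card_field[where 'a='a] by simp
  have gN: "g ^ ?N = 1" by (rule power_card_minus_one_eq_1[OF nonzero])
  have mod: "g ^ i = g ^ (i mod ?N)" for i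
  proof -
    have "g ^ i = (g ^ ?N) ^ (i div ?N) * g ^ (i mod ?N)"
      by (simp flip: power_mult power_add)
    then show ?thesis using gN by simp
  qed
  have "(\<lambda>i. g ^ i) ` {..<?N} = UNIV - {0}"
  proof (intro equalityI subsetI)
    fix w :: 'a assume "w \<in> UNIV - {0}"
    then obtain i where "g ^ i = w" using primitive by (auto simp: primitive_element_def)
    then show "w \<in> (\<lambda>i. g ^ i) ` {..<?N}" using mod[of i] N by (intro image_eqI[of _ _ "i mod ?N"]) auto
  qed (use nonzero in auto)
  then have inj: "inj_on (\<lambda>i. g ^ i) {..<?N}"
    by (intro eq_card_imp_inj_on) (simp_all add: card_Diff_singleton)
  show ?thesis
  proof
    assume "g ^ i = 1"
    then have "g ^ (i mod ?N) = g ^ 0" using mod by simp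
    then have "i mod ?N = 0" using inj_onD[OF inj] N by auto
    then show "?N dvd i" by auto
  next
    assume "?N dvd i"
    then obtain c where "i = ?N * c" ..
    then show "g ^ i = 1" using gN by (simp add: power_mult)
  qed
qed

definition dlog :: "'a \<Rightarrow> nat" where
  "dlog w = (SOME i. g ^ i = w)"

lemma power_dlog: "w \<noteq> 0 \<Longrightarrow> g ^ dlog w = w"
  unfolding dlog_def using primitive by (auto simp: primitive_element_def intro: someI_ex)

definition chi :: "'a \<Rightarrow> complex" where
  "chi w = exp (2 * of_real pi * \<i> / of_nat (CARD('a) - 1)) ^ dlog w"

lemma chi_mult:
  assumes "x \<noteq> 0" "y \<noteq> 0"
  shows "chi (x * y) = chi x * chi y"
proof -
  let ?N = "CARD('a) - 1"
  have N: "?N > 0" using two_le_card_field[where 'a='a] by simp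
  have "g ^ dlog (x * y) = g ^ (dlog x + dlog y)"
    using assms by (simp add: power_dlog power_add)
  then have "dlog (x * y) mod ?N = (dlog x + dlog y) mod ?N"
    using power_eq_power_iff_mod[OF N power_eq_1_iff] by simp
  then have "chi (x * y) = exp (2 * of_real pi * \<i> / of_nat ?N) ^ (dlog x + dlog y)"
    unfolding chi_def using power_eq_power_iff_mod[OF N exp_root_of_unity_power_eq_1_iff] N by simp
  then show ?thesis by (simp add: chi_def power_add)
qed

lemma norm_chi: "norm (chi w) = 1"
  by (simp add: chi_def norm_power)

lemma chi_power_eq_1_iff:
  assumes "w \<noteq> 0"
  shows "chi w ^ j = 1 \<longleftrightarrow> w ^ j = 1"
proof -
  have N: "CARD('a) - 1 \<ge> 1" using two_le_card_field[where 'a='a] by simp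
  have "chi w ^ j = 1 \<longleftrightarrow> (CARD('a) - 1) dvd dlog w * j"
    unfolding chi_def power_mult[symmetric] by (rule exp_root_of_unity_power_eq_1_iff[OF N])
  also have "\<dots> \<longleftrightarrow> w ^ j = 1"
    using assms power_eq_1_iff[of "dlog w * j"] by (simp add: power_mult power_dlog)
  finally show ?thesis .
qed


lemma mult_character_chi_power: "mult_character (\<lambda>w. chi w ^ a)"
  by (simp add: mult_character_def chi_mult power_mult_distrib norm_power norm_chi)

lemma chi_power_trivial_iff: "(\<forall>w. w \<noteq> 0 \<longrightarrow> chi w ^ a = 1) \<longleftrightarrow> (CARD('a) - 1) dvd a"
proof
  assume "\<forall>w. w \<noteq> 0 \<longrightarrow> chi w ^ a = 1"
  then show "(CARD('a) - 1) dvd a" using nonzero chi_power_eq_1_iff power_eq_1_iff by blast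
next
  assume "(CARD('a) - 1) dvd a"
  then obtain k where "a = (CARD('a) - 1) * k" by blast
  moreover have "chi w ^ (CARD('a) - 1) = 1" if "w \<noteq> 0" for w
    using that power_card_minus_one_eq_1[OF that] by (simp add: chi_power_eq_1_iff)
  ultimately show "\<forall>w. w \<noteq> 0 \<longrightarrow> chi w ^ a = 1" by (simp add: power_mult)
qed

text \<open>Orthogonality: the characters of order dividing \<open>m\<close> detect the subgroup of index \<open>m\<close>.\<close>
lemma sum_chi_powers_eq:
  assumes "m dvd CARD('a) - 1" and "w \<noteq> 0"
  shows "(\<Sum>i<m. chi w ^ ((CARD('a) - 1) div m * i))
    = (if w ^ ((CARD('a) - 1) div m) = 1 then of_nat m else 0)"
proof -
  define z where "z = chi w ^ ((CARD('a) - 1) div m)"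
  have "z ^ m = chi w ^ (CARD('a) - 1)"
    using assms(1) by (simp add: z_def flip: power_mult)
  then have "z ^ m = 1"
    using chi_power_eq_1_iff[OF assms(2)] power_card_minus_one_eq_1[OF assms(2)] by simp
  moreover have "z = 1 \<longleftrightarrow> w ^ ((CARD('a) - 1) div m) = 1"
    unfolding z_def by (rule chi_power_eq_1_iff[OF assms(2)])
  ultimately show ?thesis by (simp add: z_def power_mult sum_gp_strict)
qed

lemma card_solutions_eq_sum_jacobi_sums:
  fixes A B :: 'a
  assumes "m1 dvd CARD('a) - 1" "m2 dvd CARD('a) - 1" "A \<noteq> 0" "B \<noteq> 0"
  defines "e1 \<equiv> (CARD('a) - 1) div m1" and "e2 \<equiv> (CARD('a) - 1) div m2"
  shows "of_nat (m1 * m2 * card {s. s \<noteq> 0 \<and> s \<noteq> 1 \<and> (A * s) ^ e1 = 1 \<and> (B * (1 - s)) ^ e2 = 1})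
    = (\<Sum>(i, j)\<in>{..<m1} \<times> {..<m2}. chi A ^ (e1 * i) * chi B ^ (e2 * j)
          * jacobi_sum (\<lambda>w. chi w ^ (e1 * i)) (\<lambda>w. chi w ^ (e2 * j)))"
proof -
  let ?S = "UNIV - {0, 1 :: 'a}"
  let ?sol = "\<lambda>s. (A * s) ^ e1 = 1 \<and> (B * (1 - s)) ^ e2 = 1"
  have "{s. s \<noteq> 0 \<and> s \<noteq> 1 \<and> ?sol s} = {s \<in> ?S. ?sol s}" by auto
  then have "of_nat (m1 * m2 * card {s. s \<noteq> 0 \<and> s \<noteq> 1 \<and> ?sol s})
      = (\<Sum>s\<in>?S. if ?sol s then of_nat (m1 * m2) else (0::complex))"
    by (simp flip: sum.inter_filter)
  also have "\<dots> = (\<Sum>s\<in>?S. (\<Sum>i<m1. chi (A * s) ^ (e1 * i)) * (\<Sum>j<m2. chi (B * (1 - s)) ^ (e2 * j)))"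
  proof (rule sum.cong[OF refl])
    fix s assume "s \<in> ?S"
    then have nz: "A * s \<noteq> 0" "B * (1 - s) \<noteq> 0" using assms(3,4) by auto
    show "(if ?sol s then of_nat (m1 * m2) else 0)
        = (\<Sum>i<m1. chi (A * s) ^ (e1 * i)) * (\<Sum>j<m2. chi (B * (1 - s)) ^ (e2 * j))"
      unfolding e1_def e2_def sum_chi_powers_eq[OF assms(1) nz(1)] sum_chi_powers_eq[OF assms(2) nz(2)]
      by simp
  qed
  also have "\<dots> = (\<Sum>s\<in>?S. \<Sum>i<m1. \<Sum>j<m2. chi A ^ (e1 * i) * chi B ^ (e2 * j)
                   * (chi s ^ (e1 * i) * chi (1 - s) ^ (e2 * j)))"
    using assms by (intro sum.cong) (auto simp: sum_product chi_mult power_mult_distrib mult_ac)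
  also have "\<dots> = (\<Sum>i<m1. \<Sum>j<m2. chi A ^ (e1 * i) * chi B ^ (e2 * j)
                   * jacobi_sum (\<lambda>w. chi w ^ (e1 * i)) (\<lambda>w. chi w ^ (e2 * j)))"
    unfolding jacobi_sum_def sum_distrib_left
    by (subst sum.swap) (simp add: sum.swap[of _ ?S])
  finally show ?thesis by (simp add: sum.cartesian_product)
qed

lemma norm_jacobi_sum_chi_powers_le:
  assumes "m1 dvd CARD('a) - 1" "m2 dvd CARD('a) - 1" "i < m1" "j < m2" "(i, j) \<noteq> (0, 0)"
  defines "e1 \<equiv> (CARD('a) - 1) div m1" and "e2 \<equiv> (CARD('a) - 1) div m2"
  shows "norm (jacobi_sum (\<lambda>w. chi w ^ (e1 * i)) (\<lambda>w. chi w ^ (e2 * j))) \<le> sqrt CARD('a)"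
proof -
  have N: "CARD('a) - 1 > 0" using two_le_card_field[where 'a='a] by simp
  have "\<not> (CARD('a) - 1) dvd e1 * i \<or> \<not> (CARD('a) - 1) dvd e2 * j"
    using assms(3-5) multiple_of_quotient_dvd_imp_eq_0[OF N assms(1), of i]
      multiple_of_quotient_dvd_imp_eq_0[OF N assms(2), of j] unfolding e1_def e2_def by auto
  then have "\<exists>x. x \<noteq> 0 \<and> (chi x ^ (e1 * i) \<noteq> 1 \<or> chi x ^ (e2 * j) \<noteq> 1)"
    using chi_power_trivial_iff[of "e1 * i"] chi_power_trivial_iff[of "e2 * j"] by blast
  then show ?thesis by (intro norm_jacobi_sum_le mult_character_chi_power)
qed

end

text \<open>In the character expansion of the count, the trivial pair of characters contributes
  \<open>|F| - 2\<close> and each of the other \<open>m\<^sub>1 m\<^sub>2 - 1\<close> pairs a Jacobi sum of absolute value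
  at most \<open>\<surd>|F|\<close>.\<close>
lemma ex_solution_in_power_classes:
  fixes A B :: "'a::{finite,field}"
  assumes "m1 dvd CARD('a) - 1" "m2 dvd CARD('a) - 1" "A \<noteq> 0" "B \<noteq> 0"
    and small: "(real (m1 * m2) - 1) * sqrt CARD('a) < real CARD('a) - 2"
  shows "\<exists>s. s \<noteq> 0 \<and> s \<noteq> 1 \<and> (A * s) ^ ((CARD('a) - 1) div m1) = 1
                          \<and> (B * (1 - s)) ^ ((CARD('a) - 1) div m2) = 1"
proof (rule ccontr)
  assume none: "\<not> ?thesis"
  obtain g :: 'a where "primitive_element g" using ex_primitive_element by blast
  then interpret primitive_root g by unfold_locales
  define e1 where "e1 = (CARD('a) - 1) div m1"
  define e2 where "e2 = (CARD('a) - 1) div m2"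
  define f where "f = (\<lambda>(i, j). chi A ^ (e1 * i) * chi B ^ (e2 * j)
                         * jacobi_sum (\<lambda>w. chi w ^ (e1 * i)) (\<lambda>w. chi w ^ (e2 * j)))"
  let ?P = "{..<m1} \<times> {..<m2}"
  have "CARD('a) - 1 > 0" using two_le_card_field[where 'a='a] by simp
  then have "m1 > 0" "m2 > 0" using assms(1,2) by (auto intro!: Nat.gr0I)
  then have origin: "(0, 0) \<in> ?P" by simp
  have "of_nat (m1 * m2 * card {s. s \<noteq> 0 \<and> s \<noteq> 1 \<and> (A * s) ^ e1 = 1 \<and> (B * (1 - s)) ^ e2 = 1})
      = (\<Sum>p\<in>?P. f p)"
    unfolding f_def e1_def e2_def by (rule card_solutions_eq_sum_jacobi_sums[OF assms(1-4)])
  moreover have "{s. s \<noteq> 0 \<and> s \<noteq> 1 \<and> (A * s) ^ e1 = 1 \<and> (B * (1 - s)) ^ e2 = 1} = {}"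
    using none unfolding e1_def e2_def by blast
  ultimately have "(\<Sum>p\<in>?P. f p) = 0" by simp
  then have "f (0, 0) = - (\<Sum>p\<in>?P - {(0, 0)}. f p)"
    using sum.remove[OF _ origin, of f] by (simp add: eq_neg_iff_add_eq_0)
  moreover have "f (0, 0) = of_nat (CARD('a) - 2)"
    by (simp add: f_def jacobi_sum_def card_Diff_subset)
  ultimately have "real (CARD('a) - 2) = norm (- (\<Sum>p\<in>?P - {(0, 0)}. f p))"
    by (metis norm_of_nat)
  also have "\<dots> = norm (\<Sum>p\<in>?P - {(0, 0)}. f p)" by (rule norm_minus_cancel)
  also have "\<dots> \<le> (\<Sum>p\<in>?P - {(0, 0)}. sqrt CARD('a))"
  proof (rule sum_norm_le)
    fix p assume p: "p \<in> ?P - {(0, 0)}"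
    obtain i j where ij: "p = (i, j)" "i < m1" "j < m2" "(i, j) \<noteq> (0, 0)" using p by (cases p) auto
    then show "norm (f p) \<le> sqrt CARD('a)"
      using norm_jacobi_sum_chi_powers_le[OF assms(1,2) ij(2-4)]
      by (simp add: f_def e1_def e2_def norm_mult norm_power norm_chi)
  qed
  also have "\<dots> = (real (m1 * m2) - 1) * sqrt CARD('a)"
    using origin by (simp add: card_Diff_singleton card_cartesian_product of_nat_diff)
  finally show False
    using small two_le_card_field[where 'a='a] by (simp add: of_nat_diff)
qed

definition nonzero_powers :: "nat \<Rightarrow> 'a::field set" where
  "nonzero_powers r = {z ^ r | z. z \<noteq> 0}"

lemma power_power_div_eq_1:
  fixes z :: "'a::{finite,field}"
  assumes "D dvd r" "D dvd CARD('a) - 1" "z \<noteq> 0"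
  shows "(z ^ r) ^ ((CARD('a) - 1) div D) = 1"
proof -
  obtain a where r: "r = D * a" using assms(1) ..
  obtain b where N: "CARD('a) - 1 = D * b" using assms(2) ..
  have "D \<noteq> 0" using N two_le_card_field[where 'a='a] by (cases D) auto
  then have "(z ^ r) ^ ((CARD('a) - 1) div D) = (z ^ (CARD('a) - 1)) ^ a"
    unfolding N r by (simp add: mult_ac flip: power_mult)
  also have "\<dots> = 1" by (subst power_card_minus_one_eq_1[OF assms(3)]) simp
  finally show ?thesis .
qed

lemma mem_nonzero_powers_iff:
  fixes w :: "'a::{finite,field}"
  assumes "r > 0"
  shows "w \<in> nonzero_powers r \<longleftrightarrow> w \<noteq> 0 \<and> w ^ ((CARD('a) - 1) div gcd r (CARD('a) - 1)) = 1"
proof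
  assume "w \<in> nonzero_powers r"
  then obtain z :: 'a where "z \<noteq> 0" "w = z ^ r" by (auto simp: nonzero_powers_def)
  then show "w \<noteq> 0 \<and> w ^ ((CARD('a) - 1) div gcd r (CARD('a) - 1)) = 1"
    using power_power_div_eq_1[OF gcd_dvd1 gcd_dvd2 \<open>z \<noteq> 0\<close>] by simp
next
  let ?N = "CARD('a) - 1" and ?G = "gcd r (CARD('a) - 1)"
  assume w: "w \<noteq> 0 \<and> w ^ (?N div ?G) = 1"
  obtain g :: 'a where "primitive_element g" using ex_primitive_element by blast
  then interpret primitive_root g by unfold_locales
  define e where "e = ?N div ?G"
  have N: "?N = ?G * e" by (simp add: e_def)
  have "e > 0"
    using assms two_le_card_field[where 'a='a] by (simp add: e_def div_greater_zero_iff gcd_le2_nat)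
  have "g ^ (dlog w * e) = 1" using w by (simp add: e_def power_mult power_dlog)
  then have "?N dvd dlog w * e" by (simp only: power_eq_1_iff)
  then have "?G * e dvd dlog w * e" by (simp only: N[symmetric])
  then have "?G dvd dlog w" using \<open>e > 0\<close> by simp
  then obtain l where l: "dlog w = ?G * l" ..
  obtain x y where xy: "r * x = ?N * y + ?G" using bezout_nat[of r ?N] assms by auto
  have "(g ^ (x * l)) ^ r = (g ^ ?N) ^ (y * l) * g ^ dlog w"
    by (simp add: l xy algebra_simps flip: power_mult power_add)
  also have "\<dots> = w" using w power_card_minus_one_eq_1[OF nonzero] by (simp add: power_dlog)
  finally show "w \<in> nonzero_powers r"
    unfolding nonzero_powers_def using nonzero by (auto intro!: exI[of _ "g ^ (x * l)"])
qed

lemma ex_mult_mem_nonzero_powers_iff: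
  fixes c :: "'a::{finite,field}"
  assumes "r1 > 0" "r2 > 0" "c \<noteq> 0"
  shows "(\<exists>u\<in>nonzero_powers r1. \<exists>v\<in>nonzero_powers r2. c * v = u)
    \<longleftrightarrow> c ^ ((CARD('a) - 1) div gcd (gcd r1 r2) (CARD('a) - 1)) = 1"
proof
  let ?e = "(CARD('a) - 1) div gcd (gcd r1 r2) (CARD('a) - 1)"
  assume "\<exists>u\<in>nonzero_powers r1. \<exists>v\<in>nonzero_powers r2. c * v = u"
  then obtain z1 z2 :: 'a where z: "z1 \<noteq> 0" "z2 \<noteq> 0" "c * z2 ^ r2 = z1 ^ r1"
    by (auto simp: nonzero_powers_def)
  have D: "gcd (gcd r1 r2) (CARD('a) - 1) dvd r1" "gcd (gcd r1 r2) (CARD('a) - 1) dvd r2"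
    by (meson dvd_trans gcd_dvd1 gcd_dvd2)+
  have "c ^ ?e * (z2 ^ r2) ^ ?e = (z1 ^ r1) ^ ?e" unfolding z(3)[symmetric] by (rule power_mult_distrib[symmetric])
  then show "c ^ ?e = 1" using power_power_div_eq_1[OF D(1) _ z(1)] power_power_div_eq_1[OF D(2) _ z(2)] by simp
next
  let ?G = "gcd r1 r2"
  assume "c ^ ((CARD('a) - 1) div gcd ?G (CARD('a) - 1)) = 1"
  then have "c \<in> nonzero_powers ?G" using assms by (simp add: mem_nonzero_powers_iff)
  then obtain z :: 'a where z: "z \<noteq> 0" "c = z ^ ?G" by (auto simp: nonzero_powers_def)
  obtain x y where xy: "r1 * x = r2 * y + ?G" using bezout_nat[of r1 r2] assms(1) by auto
  have "c * (z ^ y) ^ r2 = (z ^ x) ^ r1"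
    by (simp add: z(2) xy algebra_simps flip: power_mult power_add)
  moreover have "(z ^ x) ^ r1 \<in> nonzero_powers r1" "(z ^ y) ^ r2 \<in> nonzero_powers r2"
    using z(1) by (auto simp: nonzero_powers_def)
  ultimately show "\<exists>u\<in>nonzero_powers r1. \<exists>v\<in>nonzero_powers r2. c * v = u" by blast
qed

lemma gcd_power_minus_one:
  fixes q :: nat
  assumes "q > 0"
  shows "gcd (q ^ a - 1) (q ^ b - 1) = q ^ gcd a b - 1"
proof (induction "a + b" arbitrary: a b rule: less_induct)
  case less
  have reduce: "gcd (q ^ a - 1) (q ^ b - 1) = gcd (q ^ (a - b) - 1) (q ^ b - 1)" if "b \<le> a" for a b
  proof -
    define x y where "x = q ^ (a - b)" and "y = q ^ b"
    have xy: "q ^ a = x * y" using that by (simp add: x_def y_def flip: power_add)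
    have "1 \<le> x" "x \<le> x * y" using assms by (simp_all add: x_def y_def)
    then have "q ^ a - 1 = x * (y - 1) + (x - 1)"
      unfolding xy diff_mult_distrib2 mult_1_right by linarith
    then have "q ^ a - 1 = q ^ (a - b) * (q ^ b - 1) + (q ^ (a - b) - 1)" by (simp add: x_def y_def)
    then show ?thesis using gcd_add_mult[of "q ^ b - 1" "q ^ (a - b)" "q ^ (a - b) - 1"] by (simp add: gcd.commute)
  qed
  show ?case
  proof (cases "a = 0 \<or> b = 0")
    case False
    then show ?thesis
      using less reduce[of b a] reduce[of a b] gcd_diff1_nat[of b a] gcd_diff1_nat[of a b]
      by (cases "b \<le> a") (simp_all add: gcd.commute)
  qed auto
qed

lemma proj_pt_scale:
  assumes "c \<noteq> 0"
  shows "proj_pt (c * a) (c * b) = proj_pt a b"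
proof (intro equalityI subsetI)
  fix p assume "p \<in> proj_pt (c * a) (c * b)"
  then obtain e where "p = (e * (c * a), e * (c * b))" by (auto simp: proj_pt_def)
  then show "p \<in> proj_pt a b" unfolding proj_pt_def by (intro CollectI exI[of _ "e * c"]) simp
next
  fix p assume "p \<in> proj_pt a b"
  then obtain e where "p = (e * a, e * b)" by (auto simp: proj_pt_def)
  then show "p \<in> proj_pt (c * a) (c * b)"
    unfolding proj_pt_def using assms by (intro CollectI exI[of _ "e / c"]) simp
qed

lemma proj_pt_eq_iff:
  fixes x1 y1 x2 y2 :: "'a::field"
  assumes "x1 \<noteq> 0" "x2 \<noteq> 0"
  shows "proj_pt x1 y1 = proj_pt x2 y2 \<longleftrightarrow> x1 * y2 = x2 * y1"
proof
  have "(x1, y1) \<in> proj_pt x1 y1" unfolding proj_pt_def by (auto intro!: exI[of _ 1])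
  moreover assume "proj_pt x1 y1 = proj_pt x2 y2"
  ultimately have "(x1, y1) \<in> proj_pt x2 y2" by simp
  then obtain c where "x1 = c * x2" "y1 = c * y2" unfolding proj_pt_def by blast
  then show "x1 * y2 = x2 * y1" by simp
next
  assume "x1 * y2 = x2 * y1"
  then have "x1 / x2 * y2 = y1" using assms(2) by (simp add: times_divide_eq_left)
  then have "proj_pt x1 y1 = proj_pt (x1 / x2 * x2) (x1 / x2 * y2)" using assms(2) by simp
  also have "\<dots> = proj_pt x2 y2" by (rule proj_pt_scale) (use assms in simp)
  finally show "proj_pt x1 y1 = proj_pt x2 y2" .
qed

lemma L_graph_inter_L_twisted_iff:
  fixes G F :: "'a::field \<Rightarrow> 'a"
  shows "L_graph G \<inter> L_twisted q h F \<noteq> {} \<longleftrightarrow> (\<exists>x y. x \<noteq> 0 \<and> y \<noteq> 0 \<and> x * F y = y ^ q ^ h * G x)"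
proof -
  have "L_graph G \<inter> L_twisted q h F \<noteq> {}
      \<longleftrightarrow> (\<exists>x y. x \<noteq> 0 \<and> y \<noteq> 0 \<and> proj_pt x (G x) = proj_pt (y ^ q ^ h) (F y))"
    unfolding L_graph_def L_twisted_def by blast
  moreover have "proj_pt x (G x) = proj_pt (y ^ q ^ h) (F y) \<longleftrightarrow> x * F y = y ^ q ^ h * G x"
    if "x \<noteq> 0" "y \<noteq> 0" for x y
    using that by (simp add: proj_pt_eq_iff)
  ultimately show ?thesis by blast
qed

lemma ex_nonzero_mult_power_eq_iff:
  fixes a c :: "'a::field"
  assumes "a \<noteq> 0" "Q \<ge> 1"
  shows "(\<exists>z. z \<noteq> 0 \<and> a * z ^ Q = z * c) \<longleftrightarrow> c / a \<in> nonzero_powers (Q - 1)"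
proof -
  have Q: "z ^ Q = z * z ^ (Q - 1)" for z :: 'a using assms(2) by (simp flip: power_Suc)
  have "a * z ^ Q = z * c \<longleftrightarrow> c / a = z ^ (Q - 1)" if "z \<noteq> 0" for z
    using that assms(1) by (auto simp: Q field_simps)
  then show ?thesis unfolding nonzero_powers_def by blast
qed

lemma ex_nonzero_mult_eq_power_iff:
  fixes a c :: "'a::field"
  assumes "a \<noteq> 0" "Q \<ge> 1"
  shows "(\<exists>z. z \<noteq> 0 \<and> a * z = z ^ Q * c) \<longleftrightarrow> c / a \<in> nonzero_powers (Q - 1)"
proof -
  have Q: "z ^ Q = z * z ^ (Q - 1)" for z :: 'a using assms(2) by (simp flip: power_Suc)
  have "a * z = z ^ Q * c \<longleftrightarrow> c / a = inverse z ^ (Q - 1)" if "z \<noteq> 0" for z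
    using that assms(1) by (auto simp: Q field_simps power_inverse)
  then have "(\<exists>z. z \<noteq> 0 \<and> a * z = z ^ Q * c) \<longleftrightarrow> (\<exists>z. z \<noteq> 0 \<and> c / a = inverse z ^ (Q - 1))"
    by blast
  also have "\<dots> \<longleftrightarrow> (\<exists>z. z \<noteq> 0 \<and> c / a = z ^ (Q - 1))"
    by (metis inverse_inverse_eq inverse_nonzero_iff_nonzero)
  finally show ?thesis unfolding nonzero_powers_def by blast
qed

lemma ex_twisted_monomial_eq_iff:
  fixes a c :: "'a::{finite,field}"
  assumes "CARD('a) = q ^ n" "a \<noteq> 0" "d < n" "h < n" "h \<noteq> d"
  shows "(\<exists>y. y \<noteq> 0 \<and> a * y ^ q ^ d = y ^ q ^ h * c)
    \<longleftrightarrow> c / a \<in> nonzero_powers (q ^ nat \<bar>int d - int h\<bar> - 1)"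
proof -
  define t where "t = nat \<bar>int d - int h\<bar>"
  have "q > 0" using assms(1) by (rule base_pos_of_card_eq_power)
  then have "q ^ t \<ge> 1" by simp
  show ?thesis
  proof (cases "h < d")
    case True
    then have "t = d - h" unfolding t_def by linarith
    then have "y ^ q ^ d = (y ^ q ^ h) ^ q ^ t" for y :: 'a
      using True by (simp flip: power_mult power_add)
    then have "(\<exists>y. y \<noteq> 0 \<and> a * y ^ q ^ d = y ^ q ^ h * c) \<longleftrightarrow> (\<exists>z. z \<noteq> 0 \<and> a * z ^ q ^ t = z * c)"
      using ex_nonzero_frobenius_iff[OF assms(1), of h "\<lambda>z. a * z ^ q ^ t = z * c"] assms(4) by simp
    then show ?thesis using ex_nonzero_mult_power_eq_iff[OF assms(2) \<open>q ^ t \<ge> 1\<close>] by (simp add: t_def)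
  next
    case False
    then have "d < h" using assms(5) by simp
    then have "t = h - d" unfolding t_def by linarith
    then have "y ^ q ^ h = (y ^ q ^ d) ^ q ^ t" for y :: 'a
      using \<open>d < h\<close> by (simp flip: power_mult power_add)
    then have "(\<exists>y. y \<noteq> 0 \<and> a * y ^ q ^ d = y ^ q ^ h * c) \<longleftrightarrow> (\<exists>z. z \<noteq> 0 \<and> a * z = z ^ q ^ t * c)"
      using ex_nonzero_frobenius_iff[OF assms(1), of d "\<lambda>z. a * z = z ^ q ^ t * c"] assms(3) by simp
    then show ?thesis using ex_nonzero_mult_eq_power_iff[OF assms(2) \<open>q ^ t \<ge> 1\<close>] by (simp add: t_def)
  qed
qed

lemma L_inter_nonempty_iff_nonzero_powers:
  fixes \<alpha> \<beta> a :: "'a::{finite,field}"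
  assumes "CARD('a) = q ^ n" "a \<noteq> 0" "d < n" "h < n" "h \<noteq> d"
  shows "L_graph (\<lambda>x. \<alpha> * x ^ q ^ k + \<beta> * x) \<inter> L_twisted q h (\<lambda>y. a * y ^ q ^ d) \<noteq> {}
    \<longleftrightarrow> (\<exists>u\<in>nonzero_powers (q ^ k - 1). (\<alpha> * u + \<beta>) / a \<in> nonzero_powers (q ^ nat \<bar>int d - int h\<bar> - 1))"
proof -
  have "q > 0" using assms(1) by (rule base_pos_of_card_eq_power)
  then have factor: "\<alpha> * x ^ q ^ k + \<beta> * x = x * (\<alpha> * x ^ (q ^ k - 1) + \<beta>)" for x :: 'a
    by (simp add: algebra_simps flip: power_Suc)
  have "L_graph (\<lambda>x. \<alpha> * x ^ q ^ k + \<beta> * x) \<inter> L_twisted q h (\<lambda>y. a * y ^ q ^ d) \<noteq> {}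
      \<longleftrightarrow> (\<exists>x. x \<noteq> 0 \<and> (\<exists>y. y \<noteq> 0 \<and> a * y ^ q ^ d = y ^ q ^ h * (\<alpha> * x ^ (q ^ k - 1) + \<beta>)))"
  proof -
    have "x * (a * y ^ q ^ d) = y ^ q ^ h * (x * (\<alpha> * x ^ (q ^ k - 1) + \<beta>))
        \<longleftrightarrow> a * y ^ q ^ d = y ^ q ^ h * (\<alpha> * x ^ (q ^ k - 1) + \<beta>)" if "x \<noteq> 0" for x y
      using that by (simp add: mult.left_commute[of _ x])
    then show ?thesis unfolding L_graph_inter_L_twisted_iff factor by blast
  qed
  also have "\<dots> \<longleftrightarrow> (\<exists>x. x \<noteq> 0 \<and> (\<alpha> * x ^ (q ^ k - 1) + \<beta>) / a \<in> nonzero_powers (q ^ nat \<bar>int d - int h\<bar> - 1))"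
    using ex_twisted_monomial_eq_iff[OF assms] by blast
  finally show ?thesis by (auto simp: nonzero_powers_def)
qed

lemma L_inter_nonempty_iff_rel_norm:
  fixes \<alpha> a :: "'a::{finite,field}"
  assumes "q \<ge> 2" "CARD('a) = q ^ n" "\<alpha> \<noteq> 0" "a \<noteq> 0" "k \<ge> 1" "d < n" "h < n" "h \<noteq> d"
  shows "L_graph (\<lambda>x. \<alpha> * x ^ q ^ k) \<inter> L_twisted q h (\<lambda>y. a * y ^ q ^ d) \<noteq> {}
    \<longleftrightarrow> rel_norm q n (gcd n (gcd k (nat \<bar>int d - int h\<bar>))) (a / \<alpha>) = 1"
proof -
  define t where "t = nat \<bar>int d - int h\<bar>"
  have "1 < q ^ k" "1 < q ^ t" using assms(1,5,8) by (intro one_less_power; simp add: t_def)+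
  then have pos: "q ^ k - 1 > 0" "q ^ t - 1 > 0" by simp_all
  have "L_graph (\<lambda>x. \<alpha> * x ^ q ^ k) \<inter> L_twisted q h (\<lambda>y. a * y ^ q ^ d) \<noteq> {}
      \<longleftrightarrow> (\<exists>u\<in>nonzero_powers (q ^ k - 1). \<exists>v\<in>nonzero_powers (q ^ t - 1). a / \<alpha> * v = u)"
  proof -
    have "a / \<alpha> * v = u \<longleftrightarrow> v = (\<alpha> * u + 0) / a" for u v
      using assms(3,4) by (auto simp: field_simps)
    then show ?thesis
      using L_inter_nonempty_iff_nonzero_powers[OF assms(2,4,6-8), of \<alpha> k 0] by (simp add: t_def)
  qed
  also have "\<dots> \<longleftrightarrow> (a / \<alpha>) ^ ((CARD('a) - 1) div gcd (gcd (q ^ k - 1) (q ^ t - 1)) (CARD('a) - 1)) = 1"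
    using assms(3,4) by (intro ex_mult_mem_nonzero_powers_iff pos) simp
  also have "gcd (gcd (q ^ k - 1) (q ^ t - 1)) (CARD('a) - 1) = q ^ gcd (gcd k t) n - 1"
    unfolding assms(2) using gcd_power_minus_one[of q] assms(1) by simp
  finally show ?thesis by (simp add: rel_norm_def assms(2) t_def gcd.commute)
qed

lemma small_exponents_condition:
  fixes q k t n m1 m2 :: nat
  assumes "q \<ge> 2" "k \<ge> 1" "t \<ge> 1" "2 * (k + t) \<le> n" "m1 \<le> q ^ k - 1" "m2 \<le> q ^ t - 1"
  shows "(real (m1 * m2) - 1) * sqrt (q ^ n) < real (q ^ n) - 2"
proof -
  define s where "s = sqrt (q ^ n)"
  have "2 \<le> q ^ k" "2 \<le> q ^ t" using assms(1-3) self_le_power[of q k] self_le_power[of q t] by linarith+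
  moreover have "m1 + 1 \<le> q ^ k" "m2 + 1 \<le> q ^ t" using assms(5,6) calculation by linarith+
  ultimately have X: "real (q ^ k) \<ge> 2" and Y: "real (q ^ t) \<ge> 2"
    and "real (m1 + 1) \<le> real (q ^ k)" "real (m2 + 1) \<le> real (q ^ t)"
    by (simp_all only: of_nat_le_iff of_nat_numeral)
  have "real ((q ^ (k + t))\<^sup>2) \<le> real (q ^ n)"
    using assms(1,4) by (simp only: of_nat_le_iff flip: power_mult) (simp add: power_increasing)
  then have XY: "real (q ^ k) * real (q ^ t) \<le> s"
    unfolding s_def by (simp add: real_le_rsqrt power_add)
  have "real m1 * real m2 \<le> (real (q ^ k) - 1) * (real (q ^ t) - 1)"
    using \<open>real (m1 + 1) \<le> real (q ^ k)\<close> \<open>real (m2 + 1) \<le> real (q ^ t)\<close> by (intro mult_mono) simp_all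
  then have "real (m1 * m2) - 1 \<le> s - 4" using XY X Y by (simp add: algebra_simps)
  moreover have "s \<ge> 1" using assms(1) by (simp add: s_def)
  ultimately have "(real (m1 * m2) - 1) * s \<le> (s - 4) * s" by (simp add: mult_right_mono)
  also have "\<dots> = real (q ^ n) - 4 * s" by (simp add: s_def algebra_simps)
  also have "\<dots> < real (q ^ n) - 2" using \<open>s \<ge> 1\<close> by simp
  finally show ?thesis unfolding s_def .
qed

lemma L_inter_nonempty_of_small_exponents:
  fixes \<alpha> \<beta> a :: "'a::{finite,field}"
  assumes "q \<ge> 2" "CARD('a) = q ^ n" "\<alpha> \<noteq> 0" "\<beta> \<noteq> 0" "a \<noteq> 0" "k \<ge> 1" "d < n" "h < n" "h \<noteq> d"
    and "2 * (k + nat \<bar>int d - int h\<bar>) \<le> n"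
  shows "L_graph (\<lambda>x. \<alpha> * x ^ q ^ k + \<beta> * x) \<inter> L_twisted q h (\<lambda>y. a * y ^ q ^ d) \<noteq> {}"
proof -
  define t where "t = nat \<bar>int d - int h\<bar>"
  define m1 where "m1 = gcd (q ^ k - 1) (CARD('a) - 1)"
  define m2 where "m2 = gcd (q ^ t - 1) (CARD('a) - 1)"
  have "1 < q ^ k" "1 < q ^ t" using assms(1,6,9) by (intro one_less_power; simp add: t_def)+
  then have pos: "q ^ k - 1 > 0" "q ^ t - 1 > 0" by simp_all
  have m: "m1 \<le> q ^ k - 1" "m2 \<le> q ^ t - 1"
    unfolding m1_def m2_def using pos by (intro gcd_le1_nat; simp)+
  have "t \<ge> 1" using assms(9) by (simp add: t_def)
  have "(real (m1 * m2) - 1) * sqrt CARD('a) < real CARD('a) - 2"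
    unfolding assms(2) by (rule small_exponents_condition[OF assms(1,6) \<open>t \<ge> 1\<close> _ m])
      (use assms(10) in \<open>simp add: t_def\<close>)
  then obtain s where s: "s \<noteq> 0" "s \<noteq> 1"
    "(- \<beta> / \<alpha> * s) ^ ((CARD('a) - 1) div m1) = 1" "(\<beta> / a * (1 - s)) ^ ((CARD('a) - 1) div m2) = 1"
    using ex_solution_in_power_classes[of m1 m2 "- \<beta> / \<alpha>" "\<beta> / a"] assms(3-5)
    unfolding m1_def m2_def by auto
  then have u: "- \<beta> / \<alpha> * s \<in> nonzero_powers (q ^ k - 1)"
    and v: "\<beta> / a * (1 - s) \<in> nonzero_powers (q ^ t - 1)"
    using assms(3-5) pos by (simp_all add: mem_nonzero_powers_iff m1_def m2_def)
  have "(\<alpha> * (- \<beta> / \<alpha> * s) + \<beta>) / a = \<beta> / a * (1 - s)"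
    using assms(3) by (simp add: field_simps)
  with v have "(\<alpha> * (- \<beta> / \<alpha> * s) + \<beta>) / a \<in> nonzero_powers (q ^ t - 1)" by (simp only:)
  with u have "\<exists>u\<in>nonzero_powers (q ^ k - 1). (\<alpha> * u + \<beta>) / a \<in> nonzero_powers (q ^ t - 1)" by blast
  then show ?thesis unfolding L_inter_nonempty_iff_nonzero_powers[OF assms(2,5,7-9)] t_def .
qed

hide_const (open) Divisibility.prime

theorem theorem3p9:
  fixes q n k d h p m :: nat
    and \<alpha> \<beta> a\<^sub>d :: "'a::{finite, field}"
  assumes "prime p" and "m \<ge> 1" and "q = p ^ m"
    and "card (UNIV :: 'a set) = q ^ n"
    and "n \<ge> 2"
    and "\<alpha> \<noteq> 0"
    and "1 \<le> k" and "k < n"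
    and "a\<^sub>d \<noteq> 0" and "d < n"
    and "h < n" and "h \<noteq> d"
  shows
    "(\<beta> = 0 \<longrightarrow>
       (L_graph (\<lambda>x. \<alpha> * x ^ (q ^ k) + \<beta> * x) \<inter> L_twisted q h (\<lambda>y. a\<^sub>d * y ^ (q ^ d)) \<noteq> {}
        \<longleftrightarrow> rel_norm q n (nat (gcd (int n) (gcd (int k) (int d - int h)))) (a\<^sub>d / \<alpha>) = 1))
     \<and>
     ((\<beta> \<noteq> 0 \<and> 2 * (k + nat \<bar>int d - int h\<bar>) \<le> n) \<longrightarrow>
       L_graph (\<lambda>x. \<alpha> * x ^ (q ^ k) + \<beta> * x) \<inter> L_twisted q h (\<lambda>y. a\<^sub>d * y ^ (q ^ d)) \<noteq> {})"
proof -
  have "p \<le> q" using assms(2,3) prime_gt_0_nat[OF assms(1)] by (simp add: self_le_power)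
  then have q: "q \<ge> 2" using prime_ge_2_nat[OF assms(1)] by simp
  have "gcd (int k) (int d - int h) = gcd (int k) (int (nat \<bar>int d - int h\<bar>))" by simp
  then have gcd: "nat (gcd (int n) (gcd (int k) (int d - int h))) = gcd n (gcd k (nat \<bar>int d - int h\<bar>))"
    by (simp only: gcd_int_int_eq nat_int)
  show ?thesis
  proof (intro conjI impI)
    assume "\<beta> = 0"
    then show "L_graph (\<lambda>x. \<alpha> * x ^ (q ^ k) + \<beta> * x) \<inter> L_twisted q h (\<lambda>y. a\<^sub>d * y ^ (q ^ d)) \<noteq> {}
        \<longleftrightarrow> rel_norm q n (nat (gcd (int n) (gcd (int k) (int d - int h)))) (a\<^sub>d / \<alpha>) = 1"
      unfolding gcd using L_inter_nonempty_iff_rel_norm[OF q assms(4,6,9,7,10-12)] by simp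
  next
    assume "\<beta> \<noteq> 0 \<and> 2 * (k + nat \<bar>int d - int h\<bar>) \<le> n"
    then show "L_graph (\<lambda>x. \<alpha> * x ^ (q ^ k) + \<beta> * x) \<inter> L_twisted q h (\<lambda>y. a\<^sub>d * y ^ (q ^ d)) \<noteq> {}"
      using L_inter_nonempty_of_small_exponents[OF q assms(4,6) _ assms(9,7,10-12)] by blast
  qed
qed

end
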